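(* Let $p$ be an odd prime with $p\equiv2\pmod3$, let $\theta\in\mathrm{Aut}(\mathbb{F}_{p^m})$ have order dividing $p^s$, and let $\mathcal C$ be a skew $\theta$-cyclic code of length $3p^s$ over $\mathbb{F}_{p^m}$. (a) If $m$ is odd, then $x^{3p^s}-1=(x^{p^s}-1)(x^{2p^s}+x^{p^s}+1)$ with central coprime factors and $\mathcal C=\mathcal C_1\oplus\mathcal C_2$, where $\mathcal C_1,\mathcal C_2$ are left ideals of $\mathbb{F}_{p^m}[x;\theta]/\langle x^{p^s}-1\rangle$ and $\mathbb{F}_{p^m}[x;\theta]/\langle x^{2p^s}+x^{p^s}+1\rangle$ respectively. Moreover $|\mathcal C|=|\mathcal C_1||\mathcal C_2|$, $\mathcal C^\perp=\mathcal C_1^\perp\oplus\mathcal C_2^\perp$ where $\mathcal C_1^\perp,\mathcal C_2^\perp$ are left ideals of the same two rings respectively, and $\mathcal C$ is self-dual iff $\mathcal C_1=\mathcal C_1^\perp$ and $\mathcal C_2=\mathcal C_2^\perp$. (b) If $m$ is even, then with $\omega\in\mathbb{F}_{p^m}^*$ a primitive cube root of unity, $\mathcal C=\mathcal C_1\oplus\mathcal C_2\oplus\mathcal C_3$, where $\mathcal C_i$ is a left ideal of $\mathbb{F}_{p^m}[x;\theta]/\langle x^{p^s}-\omega^{i-1}\rangle$ ($i=1,2,3$); moreover $|\mathcal C|=|\mathcal C_1||\mathcal C_2||\mathcal C_3|$, $\mathcal C^\perp=\mathcal C_1^\perp\oplus\mathcal C_2^\perp\oplus\mathcal C_3^\perp$,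 and $\mathcal C$ is self-dual iff $\mathcal C_1=\mathcal C_1^\perp$, $\mathcal C_2=\mathcal C_3^\perp$, $\mathcal C_3=\mathcal C_2^\perp$.
   Context: $\mathbb{F}_{p^m}[x;\theta]$ is the skew polynomial ring with $xa=\theta(a)x$. A skew $\theta$-cyclic code of length $N$ over $\mathbb{F}_{p^m}$ is a left ideal of $\mathbb{F}_{p^m}[x;\theta]/\langle x^N-1\rangle$. The decompositions are via the Chinese Remainder isomorphism for the stated factorization. $\mathcal C^\perp$ is the Euclidean dual (again skew $\theta$-cyclic); $\mathcal C_i^\perp$ denotes its component in the corresponding factor ring (in (b), the factor $x^{p^s}-\omega^{1-i}$). Self-dual means $\mathcal C=\mathcal C^\perp$. *)

theory Defs
  imports "HOL-Computational_Algebra.Polynomial" "HOL-Library.Cardinality"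
begin

text \<open>Skew polynomial ring F[x;theta] with x a = theta(a) x, modelled on the
additive group of ordinary polynomials 'a poly with a twisted product:
(a x^i)(b x^j) = a theta^i(b) x^(i+j).\<close>

definition skew_mult :: "('a::comm_ring_1 \<Rightarrow> 'a) \<Rightarrow> 'a poly \<Rightarrow> 'a poly \<Rightarrow> 'a poly" where
  "skew_mult \<theta> f g =
     (\<Sum>i\<le>degree f. \<Sum>j\<le>degree g. monom (coeff f i * (\<theta> ^^ i) (coeff g j)) (i + j))"

definition Xp :: "nat \<Rightarrow> 'a::comm_ring_1 poly" where
  "Xp n = monom 1 n"

definition is_field_aut :: "('a::field \<Rightarrow> 'a) \<Rightarrow> bool" where
  "is_field_aut \<theta> \<longleftrightarrow> bij \<theta> \<and> (\<forall>a b. \<theta> (a + b) = \<theta> a + \<theta> b \<and> \<theta> (a * b) = \<theta> a * \<theta> b)"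

text \<open>Canonical representatives of F[x;theta]/<f> (f monic, central): polynomials of
degree below deg f.\<close>
definition residues :: "'a::comm_ring_1 poly \<Rightarrow> 'a poly set" where
  "residues f = {r. degree r < degree f}"

definition skew_mod :: "('a::comm_ring_1 \<Rightarrow> 'a) \<Rightarrow> 'a poly \<Rightarrow> 'a poly \<Rightarrow> 'a poly" where
  "skew_mod \<theta> f a = (THE r. degree r < degree f \<and> (\<exists>q. a = skew_mult \<theta> q f + r))"

definition left_ideal_mod :: "('a::comm_ring_1 \<Rightarrow> 'a) \<Rightarrow> 'a poly \<Rightarrow> 'a poly set \<Rightarrow> bool" where
  "left_ideal_mod \<theta> f I \<longleftrightarrow>
     I \<subseteq> residues f \<and> 0 \<in> I \<and> (\<forall>a\<in>I. \<forall>b\<in>I. a - b \<in> I) \<and>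
     (\<forall>r\<in>residues f. \<forall>a\<in>I. skew_mod \<theta> f (skew_mult \<theta> r a) \<in> I)"

definition skew_cyclic_code :: "('a::comm_ring_1 \<Rightarrow> 'a) \<Rightarrow> nat \<Rightarrow> 'a poly set \<Rightarrow> bool" where
  "skew_cyclic_code \<theta> N C \<longleftrightarrow> left_ideal_mod \<theta> (Xp N - 1) C"

text \<open>Euclidean dual of a code of length N (codewords identified with coefficient vectors).\<close>
definition euclid_dual :: "nat \<Rightarrow> 'a::comm_ring_1 poly set \<Rightarrow> 'a poly set" where
  "euclid_dual N C = {v. degree v < N \<and> (\<forall>c\<in>C. (\<Sum>i<N. coeff c i * coeff v i) = 0)}"

definition skew_central :: "('a::comm_ring_1 \<Rightarrow> 'a) \<Rightarrow> 'a poly \<Rightarrow> bool" where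
  "skew_central \<theta> f \<longleftrightarrow> (\<forall>g. skew_mult \<theta> f g = skew_mult \<theta> g f)"

definition skew_coprime :: "('a::comm_ring_1 \<Rightarrow> 'a) \<Rightarrow> 'a poly \<Rightarrow> 'a poly \<Rightarrow> bool" where
  "skew_coprime \<theta> f g \<longleftrightarrow> (\<exists>u v. skew_mult \<theta> u f + skew_mult \<theta> v g = 1)"

definition component :: "('a::comm_ring_1 \<Rightarrow> 'a) \<Rightarrow> 'a poly \<Rightarrow> 'a poly set \<Rightarrow> 'a poly set" where
  "component \<theta> f C = skew_mod \<theta> f ` C"

end

(*
  Put y = x^n with n = p^s.  Then x^(3n) - 1 = y^3 - 1 = (y - 1)(y^2 + y + 1), which splits further
  as (y - 1)(y - w)(y - w^2) if F contains a primitive cube root of unity w.  Since theta^n = id, a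
  polynomial in y multiplies every element of F[x;theta] from the left as in F[x], and from the
  right as well if theta fixes its coefficients.  This is the case for all these factors: theta
  has odd order, so it cannot swap w and w^2.  The factors are pairwise coprime in F[y] because
  3 is a unit of F (p <> 3), and the Chinese-remainder idempotents are again polynomials in y, so
  they map a left ideal into itself and show that it is the product of its reductions modulo the
  factors; reduction is injective on the canonical representatives, which gives the cardinality
  formula and the self-duality criterion.  The Euclidean dual is a left ideal again because the
  twisted cyclic shift T a = x a mod (x^(3n) - 1) satisfies <T c, T v> = theta <c, v> and
  permutes the finite code.
*)
theory Submission
  imports Defs "HOL-Computational_Algebra.Primes"
begin

section \<open>Skew polynomial multiplication\<close>

locale skew_endo =
  fixes \<theta> :: "'a::comm_ring_1 \<Rightarrow> 'a"
  assumes hom_add: "\<theta> (a + b) = \<theta> a + \<theta> b"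
    and hom_mult: "\<theta> (a * b) = \<theta> a * \<theta> b"
    and hom_one: "\<theta> 1 = 1"
begin

lemma hom_zero [simp]: "\<theta> 0 = 0"
  using hom_add[of 0 0] by simp

lemma hom_uminus: "\<theta> (- a) = - \<theta> a"
  using hom_add[of a "- a"] by (simp add: eq_neg_iff_add_eq_0 add.commute)

lemma hom_sum: "\<theta> (\<Sum>i\<in>A. f i) = (\<Sum>i\<in>A. \<theta> (f i))"
  by (induction A rule: infinite_finite_induct) (simp_all add: hom_add)

lemma hom_power: "\<theta> (a ^ k) = \<theta> a ^ k"
  by (induction k) (simp_all add: hom_one hom_mult)

lemma funpow_hom_add: "(\<theta> ^^ i) (a + b) = (\<theta> ^^ i) a + (\<theta> ^^ i) b"
  by (induction i) (simp_all add: hom_add)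

lemma funpow_hom_mult: "(\<theta> ^^ i) (a * b) = (\<theta> ^^ i) a * (\<theta> ^^ i) b"
  by (induction i) (simp_all add: hom_mult)

lemma funpow_hom_zero [simp]: "(\<theta> ^^ i) 0 = 0"
  by (induction i) simp_all

lemma map_poly_funpow_add:
  "map_poly (\<theta> ^^ i) (g + h) = map_poly (\<theta> ^^ i) g + map_poly (\<theta> ^^ i) h"
  by (rule poly_eqI) (simp add: coeff_map_poly funpow_hom_add)

definition fixed_poly :: "'a poly \<Rightarrow> bool" where
  "fixed_poly f \<longleftrightarrow> (\<forall>i. \<theta> (coeff f i) = coeff f i)"

lemma fixed_poly_0 [simp]: "fixed_poly 0"
  by (simp add: fixed_poly_def)

lemma fixed_poly_pCons [simp]: "fixed_poly (pCons a f) \<longleftrightarrow> \<theta> a = a \<and> fixed_poly f"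
  by (auto simp: fixed_poly_def coeff_pCons split: nat.split)

lemma fixed_poly_Xp [simp]: "fixed_poly (Xp k)"
  by (simp add: fixed_poly_def Xp_def hom_one)

lemma fixed_poly_mult:
  assumes "fixed_poly f" and "fixed_poly g"
  shows "fixed_poly (f * g)"
  using assms coeff_mult_semiring_closed[of "{c. \<theta> c = c}" f g]
  by (simp add: fixed_poly_def hom_add hom_mult)

lemma fixed_poly_pcompose:
  assumes "fixed_poly f" and "fixed_poly g"
  shows "fixed_poly (f \<circ>\<^sub>p g)"
  using assms coeff_pcompose_semiring_closed[of "{c. \<theta> c = c}" f g]
  by (simp add: fixed_poly_def hom_add hom_mult)

lemma map_poly_funpow_fixed:
  assumes "fixed_poly f"
  shows "map_poly (\<theta> ^^ i) f = f"
proof -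
  have "(\<theta> ^^ i) (coeff f j) = coeff f j" for j
    using assms by (induction i) (simp_all add: fixed_poly_def)
  then show ?thesis
    by (intro poly_eqI) (simp add: coeff_map_poly)
qed

abbreviation skew_times (infixl "\<star>" 70) where "f \<star> g \<equiv> skew_mult \<theta> f g"

lemma skew_mult_eq_sum:
  assumes "degree f \<le> k"
  shows "f \<star> g = (\<Sum>i\<le>k. monom (coeff f i) i * map_poly (\<theta> ^^ i) g)"
proof -
  have "(\<Sum>j\<le>degree g. monom (coeff f i * (\<theta> ^^ i) (coeff g j)) (i + j))
          = monom (coeff f i) i * map_poly (\<theta> ^^ i) g" for i
  proof -
    have "(\<Sum>j\<le>degree g. monom (coeff f i * (\<theta> ^^ i) (coeff g j)) (i + j))
        = monom (coeff f i) i * (\<Sum>j\<le>degree g. monom (coeff (map_poly (\<theta> ^^ i) g) j) j)"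
      by (simp add: sum_distrib_left mult_monom coeff_map_poly)
    also have "\<dots> = monom (coeff f i) i * map_poly (\<theta> ^^ i) g"
      by (simp add: poly_as_sum_of_monoms' map_poly_degree_leq)
    finally show ?thesis .
  qed
  then have "f \<star> g = (\<Sum>i\<le>degree f. monom (coeff f i) i * map_poly (\<theta> ^^ i) g)"
    by (simp add: skew_mult_def)
  also have "\<dots> = (\<Sum>i\<le>k. monom (coeff f i) i * map_poly (\<theta> ^^ i) g)"
    by (rule sum.mono_neutral_left) (use assms in \<open>auto simp: coeff_eq_0\<close>)
  finally show ?thesis .
qed

lemma skew_mult_add_left: "(f + h) \<star> g = f \<star> g + h \<star> g"
proof -
  let ?k = "max (degree f) (degree h)"
  have "degree (f + h) \<le> ?k"
    by (rule degree_add_le) auto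
  then show ?thesis
    by (simp add: skew_mult_eq_sum[of _ ?k] add_monom[symmetric] distrib_right sum.distrib)
qed

lemma skew_mult_add_right: "f \<star> (g + h) = f \<star> g + f \<star> h"
  by (simp add: skew_mult_eq_sum[OF order_refl] map_poly_funpow_add distrib_left sum.distrib)

lemma skew_mult_0_left [simp]: "0 \<star> g = 0"
  by (simp add: skew_mult_def)

lemma skew_mult_0_right [simp]: "f \<star> 0 = 0"
  by (simp add: skew_mult_eq_sum[OF order_refl])

lemma skew_mult_sum_left: "(\<Sum>k\<in>A. F k) \<star> g = (\<Sum>k\<in>A. F k \<star> g)"
  by (induction A rule: infinite_finite_induct) (simp_all add: skew_mult_add_left)

lemma skew_mult_sum_right: "f \<star> (\<Sum>k\<in>A. F k) = (\<Sum>k\<in>A. f \<star> F k)"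
  by (induction A rule: infinite_finite_induct) (simp_all add: skew_mult_add_right)

lemma skew_mult_monom_left: "monom c k \<star> g = monom c k * map_poly (\<theta> ^^ k) g"
  by (simp add: skew_mult_eq_sum[OF degree_monom_le] if_distrib[of "\<lambda>x. monom x _"]
      if_distrib[of "\<lambda>x. x * _"] cong: if_cong)

lemma skew_mult_monom: "monom a i \<star> monom b j = monom (a * (\<theta> ^^ i) b) (i + j)"
  by (simp add: skew_mult_monom_left map_poly_monom mult_monom)

lemma skew_mult_assoc: "(f \<star> g) \<star> h = f \<star> (g \<star> h)"
proof -
  have monoms: "(monom a i \<star> monom b j) \<star> monom c k = monom a i \<star> (monom b j \<star> monom c k)"
    for a b c i j k
    by (simp add: skew_mult_monom funpow_hom_mult funpow_add mult.assoc add.assoc)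
  have "((\<Sum>i\<le>degree f. monom (coeff f i) i) \<star> (\<Sum>j\<le>degree g. monom (coeff g j) j))
          \<star> (\<Sum>k\<le>degree h. monom (coeff h k) k)
      = (\<Sum>i\<le>degree f. monom (coeff f i) i)
          \<star> ((\<Sum>j\<le>degree g. monom (coeff g j) j) \<star> (\<Sum>k\<le>degree h. monom (coeff h k) k))"
    by (simp only: skew_mult_sum_left skew_mult_sum_right monoms)
  then show ?thesis
    by (simp only: poly_as_sum_of_monoms)
qed

lemma skew_mult_const_left: "[:c:] \<star> g = smult c g"
  using skew_mult_monom_left[of c 0 g] by (simp add: monom_0)

lemma skew_mult_fixed_right:
  assumes "fixed_poly f"
  shows "g \<star> f = g * f"
  by (simp add: skew_mult_eq_sum[OF order_refl] map_poly_funpow_fixed[OF assms]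
      flip: sum_distrib_right) (simp add: poly_as_sum_of_monoms)

lemma skew_mult_pcompose_Xp_left:
  assumes "\<theta> ^^ n = id"
  shows "(P \<circ>\<^sub>p Xp n) \<star> g = (P \<circ>\<^sub>p Xp n) * g"
proof (induction P arbitrary: g)
  case (pCons c P)
  have Xp_left: "Xp n \<star> h = Xp n * h" for h
    by (simp add: Xp_def skew_mult_monom_left assms)
  have "(pCons c P \<circ>\<^sub>p Xp n) \<star> g = ([:c:] + Xp n \<star> (P \<circ>\<^sub>p Xp n)) \<star> g"
    by (simp add: pcompose_pCons Xp_left)
  also have "\<dots> = smult c g + Xp n * ((P \<circ>\<^sub>p Xp n) * g)"
    by (simp only: skew_mult_add_left skew_mult_const_left skew_mult_assoc)
      (simp only: pCons.IH Xp_left)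
  finally show ?case
    by (simp add: pcompose_pCons algebra_simps)
qed simp

definition central :: "'a poly \<Rightarrow> bool" where
  "central f \<longleftrightarrow> (\<forall>g. f \<star> g = f * g \<and> g \<star> f = g * f)"

lemma central_pcompose_Xp:
  assumes "\<theta> ^^ n = id" and "fixed_poly P"
  shows "central (P \<circ>\<^sub>p Xp n)"
  using assms by (simp add: central_def skew_mult_pcompose_Xp_left skew_mult_fixed_right
      fixed_poly_pcompose)

lemma central_mult:
  assumes "central f" and "central g"
  shows "central (f * g)"
  using assms unfolding central_def by (metis skew_mult_assoc mult.assoc)

lemma central_imp_skew_central: "central f \<Longrightarrow> skew_central \<theta> f"
  by (simp add: central_def skew_central_def mult.commute)

end

lemma mod_in_residues: "0 < degree f \<Longrightarrow> a mod f \<in> residues f"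
  for f :: "'a::field poly"
  by (cases "f dvd a") (auto simp: residues_def intro!: degree_mod_less_degree)

lemma image_mod_residues:
  fixes f M :: "'a::field poly"
  assumes "0 < degree f" and "f dvd M" and "M \<noteq> 0"
  shows "(\<lambda>a. a mod f) ` residues M = residues f"
proof
  show "(\<lambda>a. a mod f) ` residues M \<subseteq> residues f"
    using assms(1) by (auto intro: mod_in_residues)
  have "degree f \<le> degree M"
    using assms(2,3) by (rule dvd_imp_degree_le)
  then have "r \<in> residues M" and "r = r mod f" if "r \<in> residues f" for r
    using that by (simp_all add: residues_def mod_poly_less)
  then show "residues f \<subseteq> (\<lambda>a. a mod f) ` residues M"
    by blast
qed

lemma finite_residues: "finite (residues (f :: 'a::{finite,comm_ring_1} poly))"
proof -
  have "residues f \<subseteq> Poly ` {xs. set xs \<subseteq> UNIV \<and> length xs \<le> degree f}"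
  proof
    fix r assume "r \<in> residues f"
    then have "length (coeffs r) \<le> degree f"
      by (cases "r = 0") (auto simp: residues_def length_coeffs_degree)
    then show "r \<in> Poly ` {xs. set xs \<subseteq> UNIV \<and> length xs \<le> degree f}"
      by (auto intro!: image_eqI[where x = "coeffs r"])
  qed
  then show ?thesis
    by (rule finite_subset) (use finite_lists_length_le[of "UNIV :: 'a set"] in simp)
qed

lemma mult_dvd_of_bezout:
  fixes f g :: "'a::comm_ring_1"
  assumes "u * f + v * g = 1" and "f dvd d" and "g dvd d"
  shows "f * g dvd d"
proof -
  have "f * g dvd f * d" and "f * g dvd g * d"
    using mult_dvd_mono[OF dvd_refl assms(3), of f] mult_dvd_mono[OF assms(2) dvd_refl, of g]
    by (simp_all add: mult.commute)
  then have "f * g dvd u * (f * d) + v * (g * d)"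
    by simp
  then have "f * g dvd (u * f + v * g) * d"
    by (simp add: algebra_simps)
  then show ?thesis
    by (simp add: assms(1))
qed

lemma inj_on_mod_pair:
  fixes f g :: "'a::field poly"
  assumes "u * f + v * g = 1"
  shows "inj_on (\<lambda>a. (a mod f, a mod g)) (residues (f * g))"
proof (rule inj_onI)
  fix a b assume "a \<in> residues (f * g)" "b \<in> residues (f * g)"
    and "(a mod f, a mod g) = (b mod f, b mod g)"
  then have "f dvd a - b" "g dvd a - b" and deg: "degree (a - b) < degree (f * g)"
    by (auto simp: residues_def mod_eq_dvd_iff degree_diff_less)
  then have "f * g dvd a - b"
    using assms by (intro mult_dvd_of_bezout)
  with deg have "a - b = 0"
    using dvd_imp_degree_le by fastforce
  then show "a = b"
    by simp
qed

lemma mod_idempotent_combination: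
  fixes e e' h M :: "'a::field poly"
  assumes "e + e' = 1" and "h dvd M" and "h dvd e'"
  shows "(e * a mod M + e' * b mod M) mod h = a mod h"
proof -
  have "e * a + e' * b = (e + e') * a + e' * (b - a)"
    by (simp add: algebra_simps)
  then have "e * a + e' * b = a + e' * (b - a)"
    by (simp add: assms(1))
  moreover have "(e * a mod M + e' * b mod M) mod h = (e * a + e' * b) mod h"
    by (simp add: poly_mod_add_left mod_mod_cancel[OF assms(2)])
  ultimately have "(e * a mod M + e' * b mod M) mod h = (a + e' * (b - a)) mod h"
    by simp
  also have "\<dots> = a mod h"
    using assms(3) by (simp add: mod_eq_dvd_iff)
  finally show ?thesis .
qed

lemma degree_Xp_minus_1: "0 < N \<Longrightarrow> degree (Xp N - 1 :: 'a::comm_ring_1 poly) = N"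
  unfolding Xp_def diff_conv_add_uminus
  by (subst degree_add_eq_left) (simp_all add: degree_monom_eq)

lemma coeff_X_mult_mod_Xp_minus_1:
  fixes w :: "'a::field poly"
  assumes "degree w < N" and "i < N"
  shows "coeff (monom 1 1 * w mod (Xp N - 1)) i = coeff w (if i = 0 then N - 1 else i - 1)"
proof -
  define c where "c = coeff w (N - 1)"
  define R where "R = monom 1 1 * w - smult c (Xp N - 1)"
  have coeff_R: "coeff R j = (if j = 0 then c else if j = N then 0 else coeff w (j - 1))" for j
    using assms by (auto simp: R_def c_def Xp_def coeff_monom_mult)
  have "degree R \<le> N - 1"
    using assms(1) by (intro degree_le) (auto simp: coeff_R coeff_eq_0)
  then have "degree R < degree (Xp N - 1 :: 'a poly)"
    using assms by (simp add: degree_Xp_minus_1)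
  moreover have "monom 1 1 * w = R + smult c (Xp N - 1)"
    by (simp add: R_def)
  ultimately have "monom 1 1 * w mod (Xp N - 1) = R"
    by (simp add: poly_mod_add_left mod_smult_left mod_poly_less)
  then show ?thesis
    using assms(2) by (simp add: coeff_R c_def)
qed

lemma Xp_mult_eq_power: "Xp (k * n) = (Xp n ^ k :: 'a::comm_ring_1 poly)"
  by (simp add: Xp_def monom_power mult.commute)

lemma pcompose_Xp_linear: "[:- c, 1:] \<circ>\<^sub>p Xp n = Xp n - [:c:]"
  by (simp add: pcompose_pCons)

lemma pcompose_Xp_cyclotomic_3:
  "[:1, 1, 1:] \<circ>\<^sub>p Xp n = (Xp (2 * n) + Xp n + 1 :: 'a::comm_ring_1 poly)"
  unfolding Xp_mult_eq_power by (simp add: pcompose_pCons algebra_simps one_pCons power2_eq_square)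

lemma pcompose_Xp_cube_minus_1:
  "([:- 1, 1:] * [:1, 1, 1:]) \<circ>\<^sub>p Xp n = (Xp (3 * n) - 1 :: 'a::comm_ring_1 poly)"
  unfolding pcompose_mult pcompose_Xp_linear[of 1, simplified] pcompose_Xp_cyclotomic_3
    Xp_mult_eq_power
  by (simp add: algebra_simps power2_eq_square power3_eq_cube)

section \<open>Left ideals modulo central polynomials\<close>

locale skew_field_endo = skew_endo \<theta> for \<theta> :: "'a::field \<Rightarrow> 'a"
begin

lemma skew_mod_eq_mod:
  assumes "central f" and "0 < degree f"
  shows "skew_mod \<theta> f a = a mod f"
  unfolding skew_mod_def
proof (rule the_equality)
  show "degree (a mod f) < degree f \<and> (\<exists>q. a = q \<star> f + a mod f)"
    using assms mod_in_residues[OF assms(2)]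
    by (auto simp: central_def residues_def intro!: exI[of _ "a div f"])
next
  fix r assume "degree r < degree f \<and> (\<exists>q. a = q \<star> f + r)"
  then obtain q where "degree r < degree f" and "a = q * f + r"
    using assms(1) by (auto simp: central_def)
  then show "r = a mod f"
    by (simp add: mod_poly_less)
qed

lemma component_eq_image_mod:
  "central f \<Longrightarrow> 0 < degree f \<Longrightarrow> component \<theta> f I = (\<lambda>a. a mod f) ` I"
  by (simp add: component_def skew_mod_eq_mod)

lemma skew_mult_mod_right:
  assumes "central M"
  shows "r \<star> a mod M = r \<star> (a mod M) mod M"
proof -
  have "r \<star> (a div M * M) = (r \<star> (a div M)) * M"
    using assms by (metis central_def skew_mult_assoc)
  then have "r \<star> a = (r \<star> (a div M)) * M + r \<star> (a mod M)"
    by (metis div_mult_mod_eq skew_mult_add_right)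
  then show ?thesis
    by simp
qed

lemma skew_mult_mod_left:
  assumes "central M"
  shows "r \<star> a mod M = (r mod M) \<star> a mod M"
proof -
  have "(r div M * M) \<star> a = r div M \<star> (M * a)"
    using assms by (metis central_def skew_mult_assoc)
  also have "\<dots> = (r div M \<star> a) * M"
    using assms by (metis central_def skew_mult_assoc mult.commute)
  finally have "r \<star> a = (r div M \<star> a) * M + (r mod M) \<star> a"
    by (metis div_mult_mod_eq skew_mult_add_left)
  then show ?thesis
    by simp
qed

lemma left_ideal_modI:
  assumes "central M" and "0 < degree M"
    and "I \<subseteq> residues M" and "0 \<in> I" and "\<And>a b. a \<in> I \<Longrightarrow> b \<in> I \<Longrightarrow> a - b \<in> I"
    and "\<And>r a. a \<in> I \<Longrightarrow> r \<star> a mod M \<in> I"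
  shows "left_ideal_mod \<theta> M I"
  using assms by (simp add: left_ideal_mod_def skew_mod_eq_mod)

lemma left_ideal_mod_subset: "left_ideal_mod \<theta> M I \<Longrightarrow> I \<subseteq> residues M"
  by (simp add: left_ideal_mod_def)

lemma left_ideal_mod_zero: "left_ideal_mod \<theta> M I \<Longrightarrow> 0 \<in> I"
  by (simp add: left_ideal_mod_def)

lemma left_ideal_mod_diff: "left_ideal_mod \<theta> M I \<Longrightarrow> a \<in> I \<Longrightarrow> b \<in> I \<Longrightarrow> a - b \<in> I"
  by (simp add: left_ideal_mod_def)

lemma left_ideal_mod_add: "left_ideal_mod \<theta> M I \<Longrightarrow> a \<in> I \<Longrightarrow> b \<in> I \<Longrightarrow> a + b \<in> I"
  by (metis left_ideal_mod_diff left_ideal_mod_zero diff_0 diff_minus_eq_add)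

text \<open>For a central modulus the quotient is a ring, so a left ideal absorbs every left factor,
  not only reduced ones.\<close>
lemma left_ideal_mod_mult:
  assumes "left_ideal_mod \<theta> M I" and "central M" and "0 < degree M" and "a \<in> I"
  shows "r \<star> a mod M \<in> I"
proof -
  have "(r mod M) \<star> a mod M \<in> I"
    using assms mod_in_residues[OF assms(3)] by (simp add: left_ideal_mod_def skew_mod_eq_mod)
  then show ?thesis
    by (simp flip: skew_mult_mod_left[OF assms(2)])
qed

lemma left_ideal_mod_residues:
  "central M \<Longrightarrow> 0 < degree M \<Longrightarrow> left_ideal_mod \<theta> M (residues M)"
  by (rule left_ideal_modI) (auto simp: mod_in_residues, auto simp: residues_def degree_diff_less)

lemma left_ideal_mod_component:
  assumes I: "left_ideal_mod \<theta> M I" and "central M" and "0 < degree M"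
    and "central f" and "0 < degree f" and "f dvd M"
  shows "left_ideal_mod \<theta> f (component \<theta> f I)"
  unfolding component_eq_image_mod[OF assms(4,5)]
proof (rule left_ideal_modI[OF assms(4,5)])
  show "(\<lambda>a. a mod f) ` I \<subseteq> residues f"
    using assms(5) by (auto intro: mod_in_residues)
  show "0 \<in> (\<lambda>a. a mod f) ` I"
    using left_ideal_mod_zero[OF I] by force
  show "x - y \<in> (\<lambda>a. a mod f) ` I" if "x \<in> (\<lambda>a. a mod f) ` I" "y \<in> (\<lambda>a. a mod f) ` I" for x y
    using that left_ideal_mod_diff[OF I] by (force simp flip: poly_mod_diff_left)
  show "r \<star> x mod f \<in> (\<lambda>a. a mod f) ` I" if x: "x \<in> (\<lambda>a. a mod f) ` I" for r x
  proof -
    obtain a where a: "a \<in> I" "x = a mod f"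
      using x by blast
    have "r \<star> x mod f = (r \<star> a mod M) mod f"
      by (simp add: a(2) mod_mod_cancel[OF assms(6)] flip: skew_mult_mod_right[OF assms(4)])
    then show ?thesis
      using left_ideal_mod_mult[OF assms(1-3) a(1)] by blast
  qed
qed

end

section \<open>Chinese remainder decomposition\<close>

context skew_field_endo
begin

lemma component_component:
  assumes "central f" "0 < degree f" "central g" "0 < degree g" "f dvd g"
  shows "component \<theta> f (component \<theta> g I) = component \<theta> f I"
  using assms by (simp add: component_eq_image_mod image_image mod_mod_cancel)

lemma image_mod_pair_left_ideal:
  assumes period: "\<theta> ^^ n = id" and bezout: "U * P + V * Q = 1"
    and I: "left_ideal_mod \<theta> M I" and "central M" and "0 < degree M"
    and dvd: "P \<circ>\<^sub>p Xp n dvd M" "Q \<circ>\<^sub>p Xp n dvd M"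
  shows "(\<lambda>a. (a mod P \<circ>\<^sub>p Xp n, a mod Q \<circ>\<^sub>p Xp n)) ` I
           = (\<lambda>a. a mod P \<circ>\<^sub>p Xp n) ` I \<times> (\<lambda>a. a mod Q \<circ>\<^sub>p Xp n) ` I"
proof (intro equalityI subsetI)
  fix x assume "x \<in> (\<lambda>a. a mod P \<circ>\<^sub>p Xp n) ` I \<times> (\<lambda>a. a mod Q \<circ>\<^sub>p Xp n) ` I"
  then obtain a b where "a \<in> I" "b \<in> I" and x: "x = (a mod P \<circ>\<^sub>p Xp n, b mod Q \<circ>\<^sub>p Xp n)"
    by blast
  define e where "e = (V * Q) \<circ>\<^sub>p Xp n"
  define e' where "e' = (U * P) \<circ>\<^sub>p Xp n"
  have "e + e' = 1" "e' + e = 1"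
    using bezout by (simp_all add: e_def e'_def pcompose_1 add.commute flip: pcompose_add)
  have "e \<star> a = e * a" "e' \<star> b = e' * b"
    by (simp_all add: e_def e'_def skew_mult_pcompose_Xp_left[OF period])
  define c where "c = e * a mod M + e' * b mod M"
  have "c \<in> I"
    using left_ideal_mod_mult[OF I assms(4,5)] \<open>a \<in> I\<close> \<open>b \<in> I\<close>
      \<open>e \<star> a = e * a\<close> \<open>e' \<star> b = e' * b\<close>
    unfolding c_def by (metis left_ideal_mod_add[OF I])
  moreover have "c mod P \<circ>\<^sub>p Xp n = a mod P \<circ>\<^sub>p Xp n"
    unfolding c_def using \<open>e + e' = 1\<close> dvd(1)
    by (rule mod_idempotent_combination) (simp add: e'_def pcompose_mult)
  moreover have "c mod Q \<circ>\<^sub>p Xp n = b mod Q \<circ>\<^sub>p Xp n"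
    unfolding c_def add.commute[of "e * a mod M"] using \<open>e' + e = 1\<close> dvd(2)
    by (rule mod_idempotent_combination) (simp add: e_def pcompose_mult)
  ultimately show "x \<in> (\<lambda>a. (a mod P \<circ>\<^sub>p Xp n, a mod Q \<circ>\<^sub>p Xp n)) ` I"
    unfolding x by (intro image_eqI[of _ _ c]) simp_all
qed auto

context
  fixes n :: nat and P Q U V :: "'a poly"
  assumes period: "\<theta> ^^ n = id" and n_pos: "0 < n"
    and P_fixed: "fixed_poly P" and Q_fixed: "fixed_poly Q"
    and P_pos: "0 < degree P" and Q_pos: "0 < degree Q"
    and bezout: "U * P + V * Q = 1"
begin

lemma crt2_central:
  "central (P \<circ>\<^sub>p Xp n)" "central (Q \<circ>\<^sub>p Xp n)" "central ((P * Q) \<circ>\<^sub>p Xp n)"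
  using central_pcompose_Xp[OF period] P_fixed Q_fixed
  by (auto simp: pcompose_mult intro: central_mult)

lemma crt2_degree:
  "0 < degree (P \<circ>\<^sub>p Xp n)" "0 < degree (Q \<circ>\<^sub>p Xp n)" "0 < degree ((P * Q) \<circ>\<^sub>p Xp n)"
proof -
  have "P \<noteq> 0" "Q \<noteq> 0"
    using P_pos Q_pos by auto
  then show "0 < degree (P \<circ>\<^sub>p Xp n)" "0 < degree (Q \<circ>\<^sub>p Xp n)" "0 < degree ((P * Q) \<circ>\<^sub>p Xp n)"
    using P_pos Q_pos n_pos by (simp_all add: degree_pcompose Xp_def degree_monom_eq degree_mult_eq)
qed

lemma crt2_dvd: "P \<circ>\<^sub>p Xp n dvd (P * Q) \<circ>\<^sub>p Xp n" "Q \<circ>\<^sub>p Xp n dvd (P * Q) \<circ>\<^sub>p Xp n"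
  by (simp_all add: pcompose_mult)

lemma crt2_image:
  assumes "left_ideal_mod \<theta> ((P * Q) \<circ>\<^sub>p Xp n) I"
  shows "(\<lambda>a. (skew_mod \<theta> (P \<circ>\<^sub>p Xp n) a, skew_mod \<theta> (Q \<circ>\<^sub>p Xp n) a)) ` I
           = component \<theta> (P \<circ>\<^sub>p Xp n) I \<times> component \<theta> (Q \<circ>\<^sub>p Xp n) I"
  using image_mod_pair_left_ideal[OF period bezout assms crt2_central(3) crt2_degree(3) crt2_dvd]
  by (simp add: skew_mod_eq_mod crt2_central crt2_degree component_eq_image_mod)

lemma crt2_components:
  assumes "left_ideal_mod \<theta> ((P * Q) \<circ>\<^sub>p Xp n) I"
  shows "left_ideal_mod \<theta> (P \<circ>\<^sub>p Xp n) (component \<theta> (P \<circ>\<^sub>p Xp n) I)"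
    and "left_ideal_mod \<theta> (Q \<circ>\<^sub>p Xp n) (component \<theta> (Q \<circ>\<^sub>p Xp n) I)"
  using assms crt2_central crt2_degree crt2_dvd by (auto intro: left_ideal_mod_component)

lemma crt2_bij:
  "bij_betw (\<lambda>a. (skew_mod \<theta> (P \<circ>\<^sub>p Xp n) a, skew_mod \<theta> (Q \<circ>\<^sub>p Xp n) a))
     (residues ((P * Q) \<circ>\<^sub>p Xp n)) (residues (P \<circ>\<^sub>p Xp n) \<times> residues (Q \<circ>\<^sub>p Xp n))"
proof -
  have "(U \<circ>\<^sub>p Xp n) * (P \<circ>\<^sub>p Xp n) + (V \<circ>\<^sub>p Xp n) * (Q \<circ>\<^sub>p Xp n) = 1"
    by (simp add: bezout pcompose_1 flip: pcompose_mult pcompose_add)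
  then have "inj_on (\<lambda>a. (a mod P \<circ>\<^sub>p Xp n, a mod Q \<circ>\<^sub>p Xp n)) (residues ((P * Q) \<circ>\<^sub>p Xp n))"
    unfolding pcompose_mult by (rule inj_on_mod_pair)
  moreover have "(P * Q) \<circ>\<^sub>p Xp n \<noteq> 0"
    using crt2_degree(3) by auto
  then have "(\<lambda>a. (skew_mod \<theta> (P \<circ>\<^sub>p Xp n) a, skew_mod \<theta> (Q \<circ>\<^sub>p Xp n) a)) ` residues ((P * Q) \<circ>\<^sub>p Xp n)
      = residues (P \<circ>\<^sub>p Xp n) \<times> residues (Q \<circ>\<^sub>p Xp n)"
    using image_mod_residues[OF crt2_degree(1) crt2_dvd(1)]
      image_mod_residues[OF crt2_degree(2) crt2_dvd(2)]
    by (simp add: crt2_image left_ideal_mod_residues crt2_central crt2_degree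
        component_eq_image_mod)
  ultimately show ?thesis
    by (simp add: bij_betw_def skew_mod_eq_mod crt2_central crt2_degree)
qed

end

context
  fixes n :: nat and P1 P2 P3 U1 V1 U2 V2 :: "'a poly"
  assumes period: "\<theta> ^^ n = id" and n_pos: "0 < n"
    and fixed: "fixed_poly P1" "fixed_poly P2" "fixed_poly P3"
    and pos: "0 < degree P1" "0 < degree P2" "0 < degree P3"
    and bezout1: "U1 * P1 + V1 * (P2 * P3) = 1" and bezout2: "U2 * P2 + V2 * P3 = 1"
begin

private lemma P23: "fixed_poly (P2 * P3)" "0 < degree (P2 * P3)"
proof -
  have "P2 \<noteq> 0" "P3 \<noteq> 0"
    using pos by auto
  then show "fixed_poly (P2 * P3)" "0 < degree (P2 * P3)"
    using fixed pos by (simp_all add: fixed_poly_mult degree_mult_eq)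
qed

private lemmas crt_1_23 = crt2_image[OF period n_pos fixed(1) P23(1) pos(1) P23(2) bezout1]
  crt2_bij[OF period n_pos fixed(1) P23(1) pos(1) P23(2) bezout1]
  crt2_central[OF period n_pos fixed(1) P23(1) pos(1) P23(2) bezout1]
  crt2_degree[OF period n_pos fixed(1) P23(1) pos(1) P23(2) bezout1]
  crt2_dvd[OF period n_pos fixed(1) P23(1) pos(1) P23(2) bezout1]

private lemmas crt_2_3 = crt2_image[OF period n_pos fixed(2,3) pos(2,3) bezout2]
  crt2_bij[OF period n_pos fixed(2,3) pos(2,3) bezout2]
  crt2_central[OF period n_pos fixed(2,3) pos(2,3) bezout2]
  crt2_degree[OF period n_pos fixed(2,3) pos(2,3) bezout2]
  crt2_dvd[OF period n_pos fixed(2,3) pos(2,3) bezout2]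

private lemma crt3_eq_comp:
  "(\<lambda>a. (skew_mod \<theta> (P1 \<circ>\<^sub>p Xp n) a, skew_mod \<theta> (P2 \<circ>\<^sub>p Xp n) a, skew_mod \<theta> (P3 \<circ>\<^sub>p Xp n) a))
    = map_prod id (\<lambda>a. (skew_mod \<theta> (P2 \<circ>\<^sub>p Xp n) a, skew_mod \<theta> (P3 \<circ>\<^sub>p Xp n) a))
      \<circ> (\<lambda>a. (skew_mod \<theta> (P1 \<circ>\<^sub>p Xp n) a, skew_mod \<theta> ((P2 * P3) \<circ>\<^sub>p Xp n) a))"
  using crt_1_23 crt_2_3 by (simp add: fun_eq_iff skew_mod_eq_mod mod_mod_cancel)

lemma crt3_image:
  assumes I: "left_ideal_mod \<theta> ((P1 * (P2 * P3)) \<circ>\<^sub>p Xp n) I"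
  shows "(\<lambda>a. (skew_mod \<theta> (P1 \<circ>\<^sub>p Xp n) a, skew_mod \<theta> (P2 \<circ>\<^sub>p Xp n) a, skew_mod \<theta> (P3 \<circ>\<^sub>p Xp n) a)) ` I
      = component \<theta> (P1 \<circ>\<^sub>p Xp n) I \<times> component \<theta> (P2 \<circ>\<^sub>p Xp n) I \<times> component \<theta> (P3 \<circ>\<^sub>p Xp n) I"
proof -
  let ?G = "(P2 * P3) \<circ>\<^sub>p Xp n"
  have "left_ideal_mod \<theta> ?G (component \<theta> ?G I)"
    using I crt_1_23 by (intro left_ideal_mod_component) auto
  then have "(\<lambda>a. (skew_mod \<theta> (P2 \<circ>\<^sub>p Xp n) a, skew_mod \<theta> (P3 \<circ>\<^sub>p Xp n) a)) ` component \<theta> ?G I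
      = component \<theta> (P2 \<circ>\<^sub>p Xp n) I \<times> component \<theta> (P3 \<circ>\<^sub>p Xp n) I"
    using crt_2_3 by (simp add: crt_1_23 component_component)
  then show ?thesis
    unfolding crt3_eq_comp image_comp[symmetric] crt_1_23(1)[OF I]
    by (simp add: map_prod_surj_on)
qed

lemma crt3_components:
  assumes "left_ideal_mod \<theta> ((P1 * (P2 * P3)) \<circ>\<^sub>p Xp n) I"
  shows "left_ideal_mod \<theta> (P1 \<circ>\<^sub>p Xp n) (component \<theta> (P1 \<circ>\<^sub>p Xp n) I)"
    and "left_ideal_mod \<theta> (P2 \<circ>\<^sub>p Xp n) (component \<theta> (P2 \<circ>\<^sub>p Xp n) I)"
    and "left_ideal_mod \<theta> (P3 \<circ>\<^sub>p Xp n) (component \<theta> (P3 \<circ>\<^sub>p Xp n) I)"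
proof -
  let ?G = "(P2 * P3) \<circ>\<^sub>p Xp n"
  note components = crt2_components[OF period n_pos fixed(1) P23(1) pos(1) P23(2) bezout1 assms]
  then show "left_ideal_mod \<theta> (P1 \<circ>\<^sub>p Xp n) (component \<theta> (P1 \<circ>\<^sub>p Xp n) I)"
    by blast
  have "component \<theta> (P2 \<circ>\<^sub>p Xp n) (component \<theta> ?G I) = component \<theta> (P2 \<circ>\<^sub>p Xp n) I"
    and "component \<theta> (P3 \<circ>\<^sub>p Xp n) (component \<theta> ?G I) = component \<theta> (P3 \<circ>\<^sub>p Xp n) I"
    using crt_2_3 by (simp_all add: component_component)
  then show "left_ideal_mod \<theta> (P2 \<circ>\<^sub>p Xp n) (component \<theta> (P2 \<circ>\<^sub>p Xp n) I)"
    and "left_ideal_mod \<theta> (P3 \<circ>\<^sub>p Xp n) (component \<theta> (P3 \<circ>\<^sub>p Xp n) I)"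
    using crt2_components[OF period n_pos fixed(2,3) pos(2,3) bezout2 components(2)] by simp_all
qed

lemma crt3_bij:
  "bij_betw (\<lambda>a. (skew_mod \<theta> (P1 \<circ>\<^sub>p Xp n) a, skew_mod \<theta> (P2 \<circ>\<^sub>p Xp n) a, skew_mod \<theta> (P3 \<circ>\<^sub>p Xp n) a))
     (residues ((P1 * (P2 * P3)) \<circ>\<^sub>p Xp n))
     (residues (P1 \<circ>\<^sub>p Xp n) \<times> residues (P2 \<circ>\<^sub>p Xp n) \<times> residues (P3 \<circ>\<^sub>p Xp n))"
  unfolding crt3_eq_comp
  using crt_1_23(2) bij_betw_map_prod[OF bij_betw_id crt_2_3(2)]
  by (rule bij_betw_trans)

end

end

section \<open>The Euclidean dual\<close>

context skew_field_endo
begin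

definition shift :: "'a poly \<Rightarrow> 'a poly \<Rightarrow> 'a poly" where
  "shift M a = monom 1 1 \<star> a mod M"

lemma left_ideal_mod_of_shift_closed:
  assumes "central M" and "0 < degree M" and sub: "I \<subseteq> residues M" and zero: "0 \<in> I"
    and diff: "\<And>a b. a \<in> I \<Longrightarrow> b \<in> I \<Longrightarrow> a - b \<in> I"
    and smult: "\<And>c a. a \<in> I \<Longrightarrow> smult c a \<in> I"
    and shift: "\<And>a. a \<in> I \<Longrightarrow> shift M a \<in> I"
  shows "left_ideal_mod \<theta> M I"
proof (rule left_ideal_modI[OF assms(1-5)])
  have add: "a + b \<in> I" if "a \<in> I" "b \<in> I" for a b
    using diff[OF that(1) diff[OF zero that(2)]] by simp
  show "r \<star> a mod M \<in> I" if "a \<in> I" for r a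
    using that
  proof (induction r arbitrary: a)
    case (pCons c r)
    have "r \<star> monom 1 1 = r * monom 1 1"
      using fixed_poly_Xp[of 1] by (simp add: Xp_def skew_mult_fixed_right)
    then have "pCons c r = [:c:] + r \<star> monom 1 1"
      by (simp add: monom_Suc monom_0)
    then have "pCons c r \<star> a = smult c a + r \<star> (monom 1 1 \<star> a)"
      by (simp add: skew_mult_add_left skew_mult_const_left skew_mult_assoc)
    moreover have "smult c a mod M = smult c a"
      using pCons.prems sub degree_smult_le[of c a]
      by (intro mod_poly_less) (auto simp: residues_def)
    ultimately have "pCons c r \<star> a mod M = smult c a + r \<star> shift M a mod M"
      by (simp add: poly_mod_add_left shift_def flip: skew_mult_mod_right[OF assms(1)])
    then show ?case
      using pCons smult shift by (simp add: add)
  qed (simp add: zero)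
qed

lemma coeff_shift_Xp_minus_1:
  assumes "degree a < N" and "i < N"
  shows "coeff (shift (Xp N - 1) a) i = \<theta> (coeff a (if i = 0 then N - 1 else i - 1))"
proof -
  have "degree (map_poly \<theta> a) < N"
    using assms(1) map_poly_degree_leq[of \<theta> a] by linarith
  moreover have "shift (Xp N - 1) a = monom 1 1 * map_poly \<theta> a mod (Xp N - 1)"
    by (simp add: shift_def skew_mult_monom_left)
  ultimately have
    "coeff (shift (Xp N - 1) a) i = coeff (map_poly \<theta> a) (if i = 0 then N - 1 else i - 1)"
    using assms(2) by (simp only: coeff_X_mult_mod_Xp_minus_1)
  then show ?thesis
    by (simp add: coeff_map_poly)
qed

lemma inner_shift_Xp_minus_1:
  assumes "degree c < N" and "degree v < N"
  shows "(\<Sum>i<N. coeff (shift (Xp N - 1) c) i * coeff (shift (Xp N - 1) v) i)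
           = \<theta> (\<Sum>i<N. coeff c i * coeff v i)"
proof -
  obtain K where N: "N = Suc K"
    using assms(1) by (cases N) auto
  have "(\<Sum>i<N. coeff (shift (Xp N - 1) c) i * coeff (shift (Xp N - 1) v) i)
      = \<theta> (coeff c K) * \<theta> (coeff v K) + (\<Sum>i<K. \<theta> (coeff c i) * \<theta> (coeff v i))"
    using assms by (simp add: N sum.lessThan_Suc_shift coeff_shift_Xp_minus_1 del: sum.lessThan_Suc)
  also have "\<dots> = \<theta> (\<Sum>i<N. coeff c i * coeff v i)"
    by (simp add: N hom_sum hom_add hom_mult)
  finally show ?thesis .
qed

lemma inj_on_shift_Xp_minus_1:
  assumes "inj \<theta>"
  shows "inj_on (shift (Xp N - 1)) {a. degree a < N}"
proof (rule inj_onI, rule poly_eqI)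
  fix a b j assume a: "a \<in> {a. degree a < N}" and b: "b \<in> {a. degree a < N}"
    and eq: "shift (Xp N - 1) a = shift (Xp N - 1) b"
  show "coeff a j = coeff b j"
  proof (cases "j < N")
    case True
    define i where "i = (if j = N - 1 then 0 else Suc j)"
    have "i < N" and "(if i = 0 then N - 1 else i - 1) = j"
      using True by (auto simp: i_def)
    then have "\<theta> (coeff a j) = \<theta> (coeff b j)"
      using a b arg_cong[OF eq, of "\<lambda>p. coeff p i"] by (simp add: coeff_shift_Xp_minus_1)
    then show ?thesis
      using assms by (simp add: inj_eq)
  qed (use a b in \<open>simp add: coeff_eq_0\<close>)
qed

lemma left_ideal_mod_euclid_dual:
  assumes "inj \<theta>" and "central (Xp N - 1)" and "0 < N"
    and C: "left_ideal_mod \<theta> (Xp N - 1) C" and "finite C"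
  shows "left_ideal_mod \<theta> (Xp N - 1) (euclid_dual N C)"
proof -
  have deg: "degree (Xp N - 1 :: 'a poly) = N"
    using assms(3) by (rule degree_Xp_minus_1)
  have C_sub: "C \<subseteq> {a. degree a < N}"
    using left_ideal_mod_subset[OF C] by (simp add: residues_def deg)
  have "shift (Xp N - 1) ` C = C"
    \<comment> \<open>on the finite code C the shift is injective, hence a permutation\<close>
  proof (rule endo_inj_surj)
    show "shift (Xp N - 1) ` C \<subseteq> C"
      using left_ideal_mod_mult[OF C assms(2)] deg assms(3) by (auto simp: shift_def)
    show "inj_on (shift (Xp N - 1)) C"
      using inj_on_shift_Xp_minus_1[OF assms(1)] C_sub by (rule inj_on_subset)
  qed (fact assms(5))
  show ?thesis
  proof (rule left_ideal_mod_of_shift_closed[OF assms(2)])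
    show "shift (Xp N - 1) v \<in> euclid_dual N C" if v: "v \<in> euclid_dual N C" for v
    proof -
      have "(\<Sum>i<N. coeff c i * coeff (shift (Xp N - 1) v) i) = 0" if "c \<in> C" for c
      proof -
        obtain c0 where "c0 \<in> C" and c: "c = shift (Xp N - 1) c0"
          using \<open>c \<in> C\<close> \<open>shift (Xp N - 1) ` C = C\<close> by blast
        then show ?thesis
          using v C_sub by (auto simp: c euclid_dual_def inner_shift_Xp_minus_1)
      qed
      moreover have "degree (shift (Xp N - 1) v) < N"
        using mod_in_residues[of "Xp N - 1 :: 'a poly"] assms(3)
        by (simp add: shift_def residues_def deg)
      ultimately show ?thesis
        by (simp add: euclid_dual_def)
    qed
    show "smult c a \<in> euclid_dual N C" if "a \<in> euclid_dual N C" for c a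
      using that degree_smult_le[of c a]
      by (auto simp: euclid_dual_def mult.left_commute simp flip: sum_distrib_left)
  qed (use assms(3) in \<open>auto simp: deg euclid_dual_def residues_def degree_diff_less
      right_diff_distrib sum_subtractf\<close>)
qed

end

lemma of_nat_CARD_eq_0: "of_nat CARD('a::{finite,comm_ring_1}) = (0::'a)"
proof -
  have "(\<Sum>x\<in>UNIV. x) = (\<Sum>x\<in>UNIV. x + (1::'a))"
    by (rule sum.reindex_bij_witness[where i = "\<lambda>x. x + 1" and j = "\<lambda>x. x - 1"]) auto
  then show ?thesis
    by (simp add: sum.distrib)
qed

lemma three_neq_0:
  fixes p m :: nat
  assumes "prime p" and "p \<noteq> 3" and "CARD('a::{finite,field}) = p ^ m"
  shows "(3::'a) \<noteq> 0"
proof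
  assume "(3::'a) = 0"
  have "coprime 3 (p ^ m)"
    using assms(1,2) by (simp add: primes_coprime)
  moreover from \<open>(3::'a) = 0\<close> have "CHAR('a) dvd 3"
    using of_nat_eq_0_iff_char_dvd[where 'a = 'a, of 3] by simp
  moreover have "CHAR('a) dvd p ^ m"
    using of_nat_CARD_eq_0 assms(3) of_nat_eq_0_iff_char_dvd by metis
  ultimately have "is_unit CHAR('a)"
    by (rule coprime_common_divisor)
  then show False
    by simp
qed

lemma bezout_cyclotomic_3:
  assumes "(3::'a::field) \<noteq> 0"
  shows "smult (- 1 / 3) [:2, 1:] * [:-1, 1:] + [:1 / 3:] * [:1, 1, 1:] = (1 :: 'a poly)"
  using assms by (simp add: field_simps one_pCons)

lemma bezout_linear:
  fixes a b :: "'a::field"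
  assumes "a \<noteq> b"
  shows "[:1 / (b - a):] * [:- a, 1:] + [:- 1 / (b - a):] * [:- b, 1:] = 1"
proof -
  have "b - a \<noteq> 0"
    using assms by simp
  then show ?thesis
    by (simp add: one_pCons) (simp add: divide_simps)
qed

lemma primitive_cube_root_sum:
  fixes \<omega> :: "'a::field"
  assumes "\<omega> ^ 3 = 1" and "\<omega> \<noteq> 1"
  shows "1 + \<omega> + \<omega> ^ 2 = 0"
proof -
  have "(\<omega> - 1) * (1 + \<omega> + \<omega> ^ 2) = \<omega> ^ 3 - 1"
    by (simp add: algebra_simps power2_eq_square power3_eq_cube)
  then show ?thesis
    using assms by simp
qed

lemma cube_root_linear_factors:
  fixes \<omega> :: "'a::field"
  assumes "\<omega> ^ 3 = 1" and "\<omega> \<noteq> 1"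
  shows "[:- \<omega>, 1:] * [:- (\<omega> ^ 2), 1:] = [:1, 1, 1:]"
proof -
  have "\<omega> + \<omega> ^ 2 = - 1"
    using primitive_cube_root_sum[OF assms] by algebra
  moreover have "\<omega> * \<omega> ^ 2 = 1"
    using assms(1) by (simp add: power2_eq_square power3_eq_cube mult.assoc)
  ultimately show ?thesis
    by (simp add: algebra_simps) algebra
qed

context skew_field_endo
begin

lemma fixes_primitive_cube_root:
  assumes "inj \<theta>" and "\<theta> ^^ n = id" and "odd n" and "\<omega> ^ 3 = 1" and "\<omega> \<noteq> 1"
  shows "\<theta> \<omega> = \<omega>"
proof (rule ccontr)
  assume ne: "\<theta> \<omega> \<noteq> \<omega>"
  have "\<theta> \<omega> ^ 3 = 1" and "\<theta> \<omega> \<noteq> 1"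
    using assms(1,4,5) by (simp_all add: hom_one flip: hom_power) (metis hom_one injD)
  moreover have "(t - 1) * (t - \<omega>) * (t - \<omega> ^ 2) = t ^ 3 - 1" for t
    using primitive_cube_root_sum[OF assms(4,5)] assms(4)
    by (simp add: algebra_simps power2_eq_square power3_eq_cube) algebra
  ultimately have swap: "\<theta> \<omega> = \<omega> ^ 2"
    using ne by (metis (no_types) eq_iff_diff_eq_0 mult_eq_0_iff)
  have "\<theta> (\<omega> ^ 2) = (\<omega> ^ 2) ^ 2"
    by (simp add: hom_power swap)
  also have "\<dots> = \<omega>"
    using assms(4) by algebra
  finally have "\<theta> (\<omega> ^ 2) = \<omega>" .
  then have "(\<theta> ^^ k) \<omega> = (if even k then \<omega> else \<omega> ^ 2)" for k
    by (induction k) (simp_all add: swap)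
  then have "\<omega> ^ 2 = \<omega>"
    using assms(2,3) by (metis id_apply)
  then show False
    using assms(4,5) by (metis power2_eq_square power3_eq_cube)
qed

end

section \<open>Skew cyclic codes of length 3n\<close>

context skew_field_endo
begin

lemma cyclic_code_3n_decomposition:
  assumes period: "\<theta> ^^ n = id" and n_pos: "0 < n" and three: "(3::'a) \<noteq> 0" and "inj \<theta>"
    and C: "left_ideal_mod \<theta> (Xp (3 * n) - 1) C" and "finite C"
  shows
      "let N = 3 * n; f1 = Xp n - 1; f2 = Xp (2 * n) + Xp n + 1;
           crt = (\<lambda>a. (skew_mod \<theta> f1 a, skew_mod \<theta> f2 a));
           C1 = component \<theta> f1 C; C2 = component \<theta> f2 C;
           D = euclid_dual N C;
           D1 = component \<theta> f1 D; D2 = component \<theta> f2 D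
       in Xp N - 1 = skew_mult \<theta> f1 f2 \<and>
          skew_central \<theta> f1 \<and> skew_central \<theta> f2 \<and> skew_coprime \<theta> f1 f2 \<and>
          bij_betw crt (residues (Xp N - 1)) (residues f1 \<times> residues f2) \<and>
          left_ideal_mod \<theta> f1 C1 \<and> left_ideal_mod \<theta> f2 C2 \<and>
          crt ` C = C1 \<times> C2 \<and>
          card C = card C1 * card C2 \<and>
          left_ideal_mod \<theta> f1 D1 \<and> left_ideal_mod \<theta> f2 D2 \<and>
          crt ` D = D1 \<times> D2 \<and>
          (C = D \<longleftrightarrow> C1 = D1 \<and> C2 = D2)"
proof -
  define P Q :: "'a poly" where "P = [:- 1, 1:]" and "Q = [:1, 1, 1:]"
  define U V :: "'a poly" where "U = smult (- 1 / 3) [:2, 1:]" and "V = [:1 / 3:]"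
  have factors: "fixed_poly P" "fixed_poly Q" "0 < degree P" "0 < degree Q" "U * P + V * Q = 1"
    using bezout_cyclotomic_3[OF three]
    by (simp_all add: P_def Q_def U_def V_def hom_one hom_uminus)
  have f1: "P \<circ>\<^sub>p Xp n = Xp n - 1"
    using pcompose_Xp_linear[of 1 n] by (simp add: P_def one_pCons)
  have f2: "Q \<circ>\<^sub>p Xp n = Xp (2 * n) + Xp n + 1"
    unfolding Q_def by (rule pcompose_Xp_cyclotomic_3)
  have M: "(P * Q) \<circ>\<^sub>p Xp n = Xp (3 * n) - 1"
    unfolding P_def Q_def by (rule pcompose_Xp_cube_minus_1)
  note central = crt2_central[OF period n_pos factors, unfolded f1 f2 M]
  note bij = crt2_bij[OF period n_pos factors, unfolded f1 f2 M]
  note image = crt2_image[OF period n_pos factors, unfolded f1 f2 M]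
  note component = crt2_components[OF period n_pos factors, unfolded f1 f2 M]
  have D: "left_ideal_mod \<theta> (Xp (3 * n) - 1) (euclid_dual (3 * n) C)"
    using left_ideal_mod_euclid_dual[OF assms(4) central(3) _ C assms(6)] n_pos by simp
  have inj: "inj_on (\<lambda>a. (skew_mod \<theta> (Xp n - 1) a, skew_mod \<theta> (Xp (2 * n) + Xp n + 1) a))
      (residues (Xp (3 * n) - 1))"
    using bij by (rule bij_betw_imp_inj_on)
  have "(U \<circ>\<^sub>p Xp n) \<star> (Xp n - 1) + (V \<circ>\<^sub>p Xp n) \<star> (Xp (2 * n) + Xp n + 1) = 1"
    using central factors(5)
    by (simp add: central_def pcompose_1 flip: f1 f2 pcompose_mult pcompose_add)
  then have "skew_coprime \<theta> (Xp n - 1) (Xp (2 * n) + Xp n + 1)"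
    unfolding skew_coprime_def by blast
  moreover have "C \<noteq> {}" "euclid_dual (3 * n) C \<noteq> {}"
    using left_ideal_mod_zero[OF C] left_ideal_mod_zero[OF D] by auto
  ultimately show ?thesis
    unfolding Let_def
    using central image[OF C] image[OF D] bij component[OF C] component[OF D]
      M[unfolded pcompose_mult f1 f2]
      card_image[OF inj_on_subset[OF inj left_ideal_mod_subset[OF C]]]
      inj_on_image_eq_iff[OF inj left_ideal_mod_subset[OF C] left_ideal_mod_subset[OF D]]
    by (simp add: central_imp_skew_central card_cartesian_product central_def times_eq_iff
        component_def)
qed

lemma cyclic_code_3n_decomposition_cube_root:
  assumes period: "\<theta> ^^ n = id" and n_pos: "0 < n" and three: "(3::'a) \<noteq> 0" and "inj \<theta>"
    and C: "left_ideal_mod \<theta> (Xp (3 * n) - 1) C" and "finite C"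
    and \<omega>: "\<omega> ^ 3 = 1" "\<omega> \<noteq> 1" "\<theta> \<omega> = \<omega>"
  shows
      "let N = 3 * n;
           f1 = Xp n - [:1:]; f2 = Xp n - [:\<omega>:]; f3 = Xp n - [:\<omega> ^ 2:];
           g1 = Xp n - [:1:]; g2 = Xp n - [:inverse \<omega>:];
           g3 = Xp n - [:inverse \<omega> ^ 2:];
           crt = (\<lambda>a. (skew_mod \<theta> f1 a, skew_mod \<theta> f2 a, skew_mod \<theta> f3 a));
           crt' = (\<lambda>a. (skew_mod \<theta> g1 a, skew_mod \<theta> g2 a, skew_mod \<theta> g3 a));
           C1 = component \<theta> f1 C; C2 = component \<theta> f2 C; C3 = component \<theta> f3 C;
           D = euclid_dual N C;
           D1 = component \<theta> g1 D; D2 = component \<theta> g2 D; D3 = component \<theta> g3 D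
       in bij_betw crt (residues (Xp N - 1)) (residues f1 \<times> residues f2 \<times> residues f3) \<and>
          bij_betw crt' (residues (Xp N - 1)) (residues g1 \<times> residues g2 \<times> residues g3) \<and>
          left_ideal_mod \<theta> f1 C1 \<and> left_ideal_mod \<theta> f2 C2 \<and> left_ideal_mod \<theta> f3 C3 \<and>
          crt ` C = C1 \<times> C2 \<times> C3 \<and>
          card C = card C1 * card C2 * card C3 \<and>
          left_ideal_mod \<theta> g1 D1 \<and> left_ideal_mod \<theta> g2 D2 \<and> left_ideal_mod \<theta> g3 D3 \<and>
          crt' ` D = D1 \<times> D2 \<times> D3 \<and>
          (C = D \<longleftrightarrow> C1 = D1 \<and> C2 = D3 \<and> C3 = D2)"
proof -
  define P1 P2 P3 :: "'a poly"
    where "P1 = [:- 1, 1:]" and "P2 = [:- \<omega>, 1:]" and "P3 = [:- (\<omega> ^ 2), 1:]"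
  have "\<omega> \<noteq> \<omega> ^ 2"
    using \<omega>(1,2) by (metis power2_eq_square power3_eq_cube)
  have fixed: "fixed_poly P1" "fixed_poly P2" "fixed_poly P3"
    using \<omega>(3) by (simp_all add: P1_def P2_def P3_def hom_one hom_uminus hom_power)
  have pos: "0 < degree P1" "0 < degree P2" "0 < degree P3"
    by (simp_all add: P1_def P2_def P3_def)
  have P23: "P2 * P3 = [:1, 1, 1:]" "P3 * P2 = [:1, 1, 1:]"
    unfolding P2_def P3_def using cube_root_linear_factors[OF \<omega>(1,2)]
    by (simp_all add: mult.commute)
  obtain U1 V1 U2 V2 U3 V3
    where bezout: "U1 * P1 + V1 * (P2 * P3) = 1" "U1 * P1 + V1 * (P3 * P2) = 1"
      "U2 * P2 + V2 * P3 = 1" "U3 * P3 + V3 * P2 = 1"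
    using bezout_cyclotomic_3[OF three] bezout_linear[OF \<open>\<omega> \<noteq> \<omega> ^ 2\<close>]
      bezout_linear[OF \<open>\<omega> \<noteq> \<omega> ^ 2\<close>[symmetric]]
    unfolding P1_def P2_def P3_def P23[unfolded P2_def P3_def] by blast
  have f: "P1 \<circ>\<^sub>p Xp n = Xp n - [:1:]" "P2 \<circ>\<^sub>p Xp n = Xp n - [:\<omega>:]"
    "P3 \<circ>\<^sub>p Xp n = Xp n - [:\<omega> ^ 2:]"
    by (simp_all add: P1_def P2_def P3_def pcompose_Xp_linear)
  have "\<omega> * \<omega> ^ 2 = 1"
    using \<omega>(1) by (simp add: power2_eq_square power3_eq_cube mult.assoc)
  then have "inverse \<omega> = \<omega> ^ 2"
    by (rule inverse_unique)
  moreover have "(\<omega> ^ 2) ^ 2 = \<omega>"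
    using \<omega>(1) by algebra
  ultimately have g: "Xp n - [:inverse \<omega>:] = P3 \<circ>\<^sub>p Xp n"
    "Xp n - [:inverse \<omega> ^ 2:] = P2 \<circ>\<^sub>p Xp n"
    by (simp_all add: f)
  have M: "(P1 * (P2 * P3)) \<circ>\<^sub>p Xp n = Xp (3 * n) - 1"
    "(P1 * (P3 * P2)) \<circ>\<^sub>p Xp n = Xp (3 * n) - 1"
    unfolding P23 P1_def by (rule pcompose_Xp_cube_minus_1)+
  have D: "left_ideal_mod \<theta> (Xp (3 * n) - 1) (euclid_dual (3 * n) C)"
    using left_ideal_mod_euclid_dual[OF assms(4) _ _ C assms(6)] n_pos
      central_pcompose_Xp[OF period, of "P1 * (P2 * P3)"] fixed by (simp add: M fixed_poly_mult)
  note crt = crt3_image crt3_bij crt3_components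
  note crt123 = crt[OF period n_pos fixed pos bezout(1,3), unfolded M]
  note crt132 = crt[OF period n_pos fixed(1,3,2) pos(1,3,2) bezout(2,4), unfolded M]
  have inj: "inj_on (\<lambda>a. (skew_mod \<theta> (Xp n - [:1:]) a, skew_mod \<theta> (Xp n - [:\<omega>:]) a,
      skew_mod \<theta> (Xp n - [:\<omega> ^ 2:]) a)) (residues (Xp (3 * n) - 1))"
    using crt123(2) unfolding f by (rule bij_betw_imp_inj_on)
  have "C \<noteq> {}" "euclid_dual (3 * n) C \<noteq> {}"
    using left_ideal_mod_zero[OF C] left_ideal_mod_zero[OF D] by auto
  then show ?thesis
    unfolding Let_def g
    using crt123(1)[OF C] crt123(1)[OF D] crt132(1)[OF D] crt123(2) crt132(2)
      crt123(3-5)[OF C] crt132(3-5)[OF D]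
      card_image[OF inj_on_subset[OF inj left_ideal_mod_subset[OF C]]]
      inj_on_image_eq_iff[OF inj left_ideal_mod_subset[OF C] left_ideal_mod_subset[OF D]]
    by (simp add: f card_cartesian_product times_eq_iff component_def)
qed

end

lemma skew_field_endo_of_field_aut:
  assumes "is_field_aut \<theta>"
  shows "skew_field_endo \<theta>"
proof -
  have add: "\<And>a b. \<theta> (a + b) = \<theta> a + \<theta> b" and mult: "\<And>a b. \<theta> (a * b) = \<theta> a * \<theta> b"
    and "inj \<theta>"
    using assms by (simp_all add: is_field_aut_def bij_is_inj)
  have "\<theta> 0 = 0"
    using add[of 0 0] by (metis add.right_neutral add_left_cancel)
  moreover have "\<theta> 1 \<noteq> \<theta> 0"
    using \<open>inj \<theta>\<close> by (metis injD zero_neq_one)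
  ultimately have "\<theta> 1 = 1"
    using mult[of 1 1] by simp
  with add mult show ?thesis
    by unfold_locales
qed

theorem theorem4p3:
  fixes \<theta> :: "'a::{finite,field} \<Rightarrow> 'a" and p m s :: nat and C :: "'a poly set"
  assumes "prime p" and "odd p" and "p mod 3 = 2"
    and "CARD('a) = p ^ m"
    and "is_field_aut \<theta>" and "\<theta> ^^ (p ^ s) = id"
    and "skew_cyclic_code \<theta> (3 * p ^ s) C"
  shows
   "(odd m \<longrightarrow>
      (let N = 3 * p ^ s; f1 = Xp (p ^ s) - 1; f2 = Xp (2 * p ^ s) + Xp (p ^ s) + 1;
           crt = (\<lambda>a. (skew_mod \<theta> f1 a, skew_mod \<theta> f2 a));
           C1 = component \<theta> f1 C; C2 = component \<theta> f2 C;
           D = euclid_dual N C;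
           D1 = component \<theta> f1 D; D2 = component \<theta> f2 D
       in Xp N - 1 = skew_mult \<theta> f1 f2 \<and>
          skew_central \<theta> f1 \<and> skew_central \<theta> f2 \<and> skew_coprime \<theta> f1 f2 \<and>
          bij_betw crt (residues (Xp N - 1)) (residues f1 \<times> residues f2) \<and>
          left_ideal_mod \<theta> f1 C1 \<and> left_ideal_mod \<theta> f2 C2 \<and>
          crt ` C = C1 \<times> C2 \<and>
          card C = card C1 * card C2 \<and>
          left_ideal_mod \<theta> f1 D1 \<and> left_ideal_mod \<theta> f2 D2 \<and>
          crt ` D = D1 \<times> D2 \<and>
          (C = D \<longleftrightarrow> C1 = D1 \<and> C2 = D2)))
    \<and>
    (even m \<longrightarrow>
      (\<forall>\<omega>::'a. \<omega> ^ 3 = 1 \<and> \<omega> \<noteq> 1 \<longrightarrow>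
      (let N = 3 * p ^ s;
           f1 = Xp (p ^ s) - [:1:]; f2 = Xp (p ^ s) - [:\<omega>:]; f3 = Xp (p ^ s) - [:\<omega> ^ 2:];
           g1 = Xp (p ^ s) - [:1:]; g2 = Xp (p ^ s) - [:inverse \<omega>:];
           g3 = Xp (p ^ s) - [:inverse \<omega> ^ 2:];
           crt = (\<lambda>a. (skew_mod \<theta> f1 a, skew_mod \<theta> f2 a, skew_mod \<theta> f3 a));
           crt' = (\<lambda>a. (skew_mod \<theta> g1 a, skew_mod \<theta> g2 a, skew_mod \<theta> g3 a));
           C1 = component \<theta> f1 C; C2 = component \<theta> f2 C; C3 = component \<theta> f3 C;
           D = euclid_dual N C;
           D1 = component \<theta> g1 D; D2 = component \<theta> g2 D; D3 = component \<theta> g3 D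
       in bij_betw crt (residues (Xp N - 1)) (residues f1 \<times> residues f2 \<times> residues f3) \<and>
          bij_betw crt' (residues (Xp N - 1)) (residues g1 \<times> residues g2 \<times> residues g3) \<and>
          left_ideal_mod \<theta> f1 C1 \<and> left_ideal_mod \<theta> f2 C2 \<and> left_ideal_mod \<theta> f3 C3 \<and>
          crt ` C = C1 \<times> C2 \<times> C3 \<and>
          card C = card C1 * card C2 * card C3 \<and>
          left_ideal_mod \<theta> g1 D1 \<and> left_ideal_mod \<theta> g2 D2 \<and> left_ideal_mod \<theta> g3 D3 \<and>
          crt' ` D = D1 \<times> D2 \<times> D3 \<and>
          (C = D \<longleftrightarrow> C1 = D1 \<and> C2 = D3 \<and> C3 = D2))))"
proof -
  interpret skew_field_endo \<theta>
    using assms(5) by (rule skew_field_endo_of_field_aut)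
  have "inj \<theta>"
    using assms(5) by (simp add: is_field_aut_def bij_is_inj)
  moreover have "0 < p ^ s" and "odd (p ^ s)"
    using assms(1,2) by (simp_all add: prime_gt_0_nat)
  moreover have "(3::'a) \<noteq> 0"
    using assms(1,3,4) by (intro three_neq_0) auto
  moreover have C: "left_ideal_mod \<theta> (Xp (3 * p ^ s) - 1) C"
    using assms(7) by (simp add: skew_cyclic_code_def)
  moreover have "finite C"
    using left_ideal_mod_subset[OF C] finite_residues by (rule finite_subset)
  ultimately show ?thesis
    \<comment> \<open>the parity of m only decides whether a primitive cube root of unity exists;
      the argument itself does not use it\<close>
    using cyclic_code_3n_decomposition[OF assms(6)]
      cyclic_code_3n_decomposition_cube_root[OF assms(6)]
      fixes_primitive_cube_root[OF _ assms(6)]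
    by blast
qed

end
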